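(* Let $L$ be a (right) Leibniz algebra and $B$ an ideal of $L$. For every integer $n\geq 1$, $B^n\subseteq {}^{n}B+\mathrm{Es}(B)$.
   Context: $F$ is a field of characteristic different from $2$ and all algebras are finite-dimensional over $F$. A (right) Leibniz algebra is an $F$-vector space $L$ with a bilinear product $(x,y)\mapsto xy$ satisfying $x(yz)=(xy)z-(xz)y$ for all $x,y,z\in L$. For subspaces $U,V\subseteq L$, $UV$ denotes the linear span of all $uv$ with $u\in U$, $v\in V$. An ideal of $L$ is a subspace $B$ with $LB\subseteq B$ and $BL\subseteq B$. Right powers: $B^1=B$, $B^{n+1}=B^nB$. Left powers: ${}^1B=B$, ${}^{n+1}B=B\,({}^{n}B)$. $\mathrm{Ess}(L)$ is the ideal generated by all squares $xx$ ($x\in L$) and $\mathrm{Es}(B)=B\cap\mathrm{Ess}(L)$. *)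

theory Defs
  imports Main "HOL.Vector_Spaces"
begin

definition bilinear_prod :: "('f::field \<Rightarrow> 'v::ab_group_add \<Rightarrow> 'v) \<Rightarrow> ('v \<Rightarrow> 'v \<Rightarrow> 'v) \<Rightarrow> bool" where
  "bilinear_prod scale mult \<longleftrightarrow>
     (\<forall>x y z. mult (x + y) z = mult x z + mult y z) \<and>
     (\<forall>x y z. mult x (y + z) = mult x y + mult x z) \<and>
     (\<forall>c x y. mult (scale c x) y = scale c (mult x y)) \<and>
     (\<forall>c x y. mult x (scale c y) = scale c (mult x y))"

definition right_leibniz :: "('f::field \<Rightarrow> 'v::ab_group_add \<Rightarrow> 'v) \<Rightarrow> ('v \<Rightarrow> 'v \<Rightarrow> 'v) \<Rightarrow> bool" where
  "right_leibniz scale mult \<longleftrightarrow>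
     vector_space scale \<and> bilinear_prod scale mult \<and>
     (\<forall>x y z. mult x (mult y z) = mult (mult x y) z - mult (mult x z) y)"

definition sprod :: "('f::field \<Rightarrow> 'v::ab_group_add \<Rightarrow> 'v) \<Rightarrow> ('v \<Rightarrow> 'v \<Rightarrow> 'v) \<Rightarrow> 'v set \<Rightarrow> 'v set \<Rightarrow> 'v set" where
  "sprod scale mult U V = module.span scale {mult u v | u v. u \<in> U \<and> v \<in> V}"

definition ssum :: "'v::ab_group_add set \<Rightarrow> 'v set \<Rightarrow> 'v set" where
  "ssum U V = {u + v | u v. u \<in> U \<and> v \<in> V}"

definition is_ideal :: "('f::field \<Rightarrow> 'v::ab_group_add \<Rightarrow> 'v) \<Rightarrow> ('v \<Rightarrow> 'v \<Rightarrow> 'v) \<Rightarrow> 'v set \<Rightarrow> bool" where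
  "is_ideal scale mult B \<longleftrightarrow> module.subspace scale B \<and>
     (\<forall>x b. b \<in> B \<longrightarrow> mult x b \<in> B) \<and> (\<forall>x b. b \<in> B \<longrightarrow> mult b x \<in> B)"

text \<open>Right powers: rpow B 1 = B, rpow B (n+1) = (rpow B n) B.
  (The value at 0 is irrelevant; we set it to B.)\<close>
fun rpow :: "('f::field \<Rightarrow> 'v::ab_group_add \<Rightarrow> 'v) \<Rightarrow> ('v \<Rightarrow> 'v \<Rightarrow> 'v) \<Rightarrow> 'v set \<Rightarrow> nat \<Rightarrow> 'v set" where
  "rpow scale mult B 0 = B"
| "rpow scale mult B (Suc 0) = B"
| "rpow scale mult B (Suc (Suc n)) = sprod scale mult (rpow scale mult B (Suc n)) B"

fun lpow :: "('f::field \<Rightarrow> 'v::ab_group_add \<Rightarrow> 'v) \<Rightarrow> ('v \<Rightarrow> 'v \<Rightarrow> 'v) \<Rightarrow> 'v set \<Rightarrow> nat \<Rightarrow> 'v set" where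
  "lpow scale mult B 0 = B"
| "lpow scale mult B (Suc 0) = B"
| "lpow scale mult B (Suc (Suc n)) = sprod scale mult B (lpow scale mult B (Suc n))"

definition Ess :: "('f::field \<Rightarrow> 'v::ab_group_add \<Rightarrow> 'v) \<Rightarrow> ('v \<Rightarrow> 'v \<Rightarrow> 'v) \<Rightarrow> 'v set" where
  "Ess scale mult = \<Inter>{I. is_ideal scale mult I \<and> {mult x x | x. True} \<subseteq> I}"

definition Es :: "('f::field \<Rightarrow> 'v::ab_group_add \<Rightarrow> 'v) \<Rightarrow> ('v \<Rightarrow> 'v \<Rightarrow> 'v) \<Rightarrow> 'v set \<Rightarrow> 'v set" where
  "Es scale mult B = B \<inter> Ess scale mult"

end

theory Submission
  imports Defs
begin

text \<open>Polarising the square (a + b)(a + b) shows ab = -ba modulo Ess(L). So if x = a + e with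
  a in the left power ^nB and e in Es(B), and b is in B, then xb differs from
  -ba, an element of the next left power, by an element of B \<inter> Ess(L); induction on n
  finishes the proof.\<close>

context vector_space
begin

lemma subspace_ssum:
  assumes "subspace U" and "subspace W"
  shows "subspace (ssum U W)"
  unfolding subspace_def ssum_def
proof (intro conjI ballI allI)
  show "0 \<in> {u + w |u w. u \<in> U \<and> w \<in> W}"
    using assms subspace_0 by force
next
  fix x y assume "x \<in> {u + w |u w. u \<in> U \<and> w \<in> W}" "y \<in> {u + w |u w. u \<in> U \<and> w \<in> W}"
  then obtain u1 w1 u2 w2 where "x = u1 + w1" "y = u2 + w2" "u1 \<in> U" "u2 \<in> U" "w1 \<in> W" "w2 \<in> W"
    by blast
  then show "x + y \<in> {u + w |u w. u \<in> U \<and> w \<in> W}"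
    using assms subspace_add by (intro CollectI exI[of _ "u1 + u2"] exI[of _ "w1 + w2"]) (auto simp: algebra_simps)
next
  fix c x assume "x \<in> {u + w |u w. u \<in> U \<and> w \<in> W}"
  then obtain u w where "x = u + w" "u \<in> U" "w \<in> W"
    by blast
  then show "scale c x \<in> {u + w |u w. u \<in> U \<and> w \<in> W}"
    using assms subspace_scale by (intro CollectI exI[of _ "scale c u"] exI[of _ "scale c w"]) (auto simp: scale_right_distrib)
qed

lemma subspace_sprod: "subspace (sprod scale mult U W)"
  by (simp add: sprod_def subspace_span)

lemma mult_mem_sprod: "u \<in> U \<Longrightarrow> w \<in> W \<Longrightarrow> mult u w \<in> sprod scale mult U W"
  unfolding sprod_def by (auto intro: span_base)

lemma sprod_subset:
  assumes "subspace S" and "\<And>u w. u \<in> U \<Longrightarrow> w \<in> W \<Longrightarrow> mult u w \<in> S"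
  shows "sprod scale mult U W \<subseteq> S"
  unfolding sprod_def by (rule span_minimal) (use assms in auto)

lemma subspace_lpow:
  assumes "subspace B"
  shows "subspace (lpow scale mult B n)"
  using assms by (cases "(scale, mult, B, n)" rule: lpow.cases) (simp_all add: subspace_sprod)

lemma is_ideal_Ess: "is_ideal scale mult (Ess scale mult)"
  unfolding is_ideal_def Ess_def subspace_def by auto

lemma square_mem_Ess: "mult x x \<in> Ess scale mult"
  unfolding Ess_def by auto

lemma mult_add_mult_commute_mem_Ess:
  assumes "bilinear_prod scale mult"
  shows "mult a b + mult b a \<in> Ess scale mult"
proof -
  have "mult (a + b) (a + b) = mult a a + (mult a b + mult b a) + mult b b"
    using assms by (simp add: bilinear_prod_def add.assoc)
  then have "mult a b + mult b a = mult (a + b) (a + b) - mult a a - mult b b"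
    by (simp add: algebra_simps)
  moreover have "subspace (Ess scale mult)"
    using is_ideal_Ess by (simp add: is_ideal_def)
  ultimately show ?thesis
    by (metis square_mem_Ess subspace_diff)
qed

lemma subspace_Es:
  assumes "subspace B"
  shows "subspace (Es scale mult B)"
  using assms is_ideal_Ess subspace_inter by (simp add: Es_def is_ideal_def)

lemma mult_right_mem_lpow_plus_Es:
  assumes bil: "bilinear_prod scale mult" and B: "is_ideal scale mult B"
    and x: "x \<in> ssum (lpow scale mult B (Suc n)) (Es scale mult B)" and b: "b \<in> B"
  shows "mult x b \<in> ssum (lpow scale mult B (Suc (Suc n))) (Es scale mult B)"
proof -
  have subB: "subspace B" and mult_B: "mult y b \<in> B" for y
    using B b by (auto simp: is_ideal_def)
  obtain a e where x_eq: "x = a + e" and a: "a \<in> lpow scale mult B (Suc n)" and e: "e \<in> Es scale mult B"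
    using x by (auto simp: ssum_def)
  have "- mult b a \<in> lpow scale mult B (Suc (Suc n))"
    using subspace_neg[OF subspace_sprod mult_mem_sprod[OF b a]] by simp
  moreover have "mult a b + mult b a \<in> Es scale mult B"
    using mult_add_mult_commute_mem_Ess[OF bil] mult_B b B subB subspace_add
    by (simp add: Es_def is_ideal_def)
  moreover have "mult e b \<in> Es scale mult B"
    using e mult_B is_ideal_Ess by (simp add: Es_def is_ideal_def)
  moreover have "mult x b = - mult b a + ((mult a b + mult b a) + mult e b)"
    using bil x_eq by (simp add: bilinear_prod_def algebra_simps)
  ultimately show ?thesis
    unfolding ssum_def using subspace_Es[OF subB] subspace_add by blast
qed

lemma rpow_subset_lpow_plus_Es:
  assumes bil: "bilinear_prod scale mult" and B: "is_ideal scale mult B"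
  shows "rpow scale mult B (Suc n) \<subseteq> ssum (lpow scale mult B (Suc n)) (Es scale mult B)"
proof (induction n)
  case 0
  have "0 \<in> Es scale mult B"
    using B subspace_Es subspace_0 by (simp add: is_ideal_def)
  then show ?case
    unfolding ssum_def by force
next
  case (Suc n)
  have "subspace B"
    using B by (simp add: is_ideal_def)
  then have "subspace (ssum (lpow scale mult B (Suc (Suc n))) (Es scale mult B))"
    by (intro subspace_ssum subspace_lpow subspace_Es)
  then show ?case
    unfolding rpow.simps
    by (rule sprod_subset) (use Suc.IH mult_right_mem_lpow_plus_Es[OF bil B] in blast)
qed

end

theorem lemma3p2:
  fixes scale :: "'f::field \<Rightarrow> 'v::ab_group_add \<Rightarrow> 'v"
    and mult :: "'v \<Rightarrow> 'v \<Rightarrow> 'v"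
    and B :: "'v set" and n :: nat
  assumes char: "(2::'f) \<noteq> 0"
    and fin: "\<exists>S. finite S \<and> module.span scale S = UNIV"
    and leib: "right_leibniz scale mult"
    and ideal: "is_ideal scale mult B"
    and n: "n \<ge> 1"
  shows "rpow scale mult B n \<subseteq> ssum (lpow scale mult B n) (Es scale mult B)"
proof -
  interpret vector_space scale
    using leib by (simp add: right_leibniz_def)
  obtain m where "n = Suc m"
    using n by (cases n) auto
  then show ?thesis
    using leib ideal rpow_subset_lpow_plus_Es by (simp add: right_leibniz_def)
qed

end
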